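(* Let $\zeta\in\mathbb{C}^*$. The set $\{\operatorname{Tr} M : M\in G_q(\zeta)\}$ is finite if and only if $\zeta$ is a primitive $n$-th root of unity for some $n\in\{2,3,4,5,6\}$.
   Context: Let $q$ be a formal parameter and let $R_q=\begin{pmatrix} q & 1\\ 0 & 1\end{pmatrix}$, $S_q=\begin{pmatrix} 0 & -q^{-1}\\ 1 & 0\end{pmatrix}\in \mathrm{GL}(2,\mathbb{Z}[q,q^{-1}])$. Let $G_q=\langle R_q,S_q\rangle$ be the group they generate. For $\zeta\in\mathbb{C}^*$, set $G_q(\zeta)=\{M_q|_{q=\zeta} : M_q\in G_q\}\subset \mathrm{GL}(2,\mathbb{C})$. *)

theory Defs
  imports "HOL-Analysis.Analysis"
begin

definition mat2 :: "complex \<Rightarrow> complex \<Rightarrow> complex \<Rightarrow> complex \<Rightarrow> complex^2^2" where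
  "mat2 a b c d = vector [vector [a, b], vector [c, d]]"

text \<open>The generators R_q, S_q and their inverses, as functions of the parameter q
  (entries are Laurent polynomials in q, represented by their values on nonzero q).\<close>
definition Rq :: "complex \<Rightarrow> complex^2^2" where
  "Rq q = mat2 q 1 0 1"
definition Rq_inv :: "complex \<Rightarrow> complex^2^2" where
  "Rq_inv q = mat2 (inverse q) (- inverse q) 0 1"
definition Sq :: "complex \<Rightarrow> complex^2^2" where
  "Sq q = mat2 0 (- inverse q) 1 0"
definition Sq_inv :: "complex \<Rightarrow> complex^2^2" where
  "Sq_inv q = mat2 0 1 (- q) 0"

inductive_set Gq :: "(complex \<Rightarrow> complex^2^2) set" where
  one: "(\<lambda>q. mat 1) \<in> Gq"
| R: "M \<in> Gq \<Longrightarrow> (\<lambda>q. M q ** Rq q) \<in> Gq"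
| Rinv: "M \<in> Gq \<Longrightarrow> (\<lambda>q. M q ** Rq_inv q) \<in> Gq"
| S: "M \<in> Gq \<Longrightarrow> (\<lambda>q. M q ** Sq q) \<in> Gq"
| Sinv: "M \<in> Gq \<Longrightarrow> (\<lambda>q. M q ** Sq_inv q) \<in> Gq"

definition Gq_at :: "complex \<Rightarrow> (complex^2^2) set" where
  "Gq_at z = (\<lambda>M. M z) ` Gq"

definition primitive_root_of_unity :: "nat \<Rightarrow> complex \<Rightarrow> bool" where
  "primitive_root_of_unity n z \<longleftrightarrow> n \<ge> 1 \<and> z ^ n = 1 \<and> (\<forall>k. 1 \<le> k \<and> k < n \<longrightarrow> z ^ k \<noteq> 1)"

lemma Rq_inv_ok: "q \<noteq> 0 \<Longrightarrow> Rq q ** Rq_inv q = mat 1"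
  unfolding Rq_def Rq_inv_def mat2_def
  by (simp add: matrix_matrix_mult_def vec_eq_iff forall_2 sum_2 mat_def vector_def field_simps)

lemma Sq_inv_ok: "q \<noteq> 0 \<Longrightarrow> Sq q ** Sq_inv q = mat 1"
  unfolding Sq_def Sq_inv_def mat2_def
  by (simp add: matrix_matrix_mult_def vec_eq_iff forall_2 sum_2 mat_def vector_def field_simps)

end

theory Submission
  imports Defs
begin

text \<open>
  For \<open>|w| = 1\<close> the elements of \<open>G_q(w)\<close> have unimodular eigenvalues, hence
  traces of modulus at most 2, whenever \<open>Re w < 1/2\<close> (the group preserves a definite Hermitian
  form) or \<open>w^2 - w + 1 = 0\<close> (the generators share an eigenvector); this covers every root of
  unity \<open>w \<noteq> 1\<close> of order at most 6. On the \<open>n\<close>-th roots of unity the trace of \<open>M_q\<close> is an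
  integer polynomial \<open>\<Sum>k<n. a_k w^k\<close>, and discrete Fourier inversion over the powers \<open>\<zeta>^j\<close>,
  \<open>1 \<le> j < n\<close>, of a primitive root bounds the differences \<open>a_k - a_(n-1)\<close>, which leaves only
  finitely many values.

  If \<open>\<zeta>\<close> is not a root of unity the traces \<open>\<zeta>^k + 1\<close> of \<open>R^k\<close> are distinct, and
  for \<open>\<zeta> = 1\<close> so are the traces \<open>k\<close> of \<open>R^k S\<close>. Let \<open>\<zeta>\<close> be primitive of order \<open>n \<ge> 7\<close>
  and suppose there are finitely many traces. Then all eigenvalues are unimodular, so
  \<open>\<sigma>(X) = tr(X)^2 / det(X)\<close> lies in \<open>[0, 4]\<close>, and Fricke's identity yields
  \<open>2 - tr[A, B] \<le> (4 - \<sigma>(A)) (4 - \<sigma>(B)) / 4\<close>. A power \<open>B\<close> of \<open>R\<close> has eigenvalue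
  \<open>e^(2 \<pi> i / n)\<close>, so \<open>\<sigma>(B) = 4 - x\<close> with \<open>x < 1\<close>, and the iterated commutators
  \<open>C_0 = S\<close>, \<open>C_(k+1) = [C_k, B]\<close> satisfy \<open>2 - tr C_(k+1) \<le> x^(k+1)\<close>. Finiteness forces some
  \<open>C_(k+1)\<close> to have trace 2, and then \<open>C_(k+1) = 1\<close>, because a nontrivial unipotent element
  produces infinitely many traces. For the least such \<open>k\<close> the matrix \<open>C_k\<close> commutes with \<open>B\<close>:
  for \<open>k = 0\<close> this is false, and otherwise it forces \<open>tr C_k = 2 - x\<close>, which contradicts the
  estimate for \<open>k \<ge> 2\<close> and a direct computation of \<open>tr [S, B]\<close> for \<open>k = 1\<close>.
\<close>

section \<open>Two-by-two complex matrices\<close>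

type_synonym cmat2 = "complex^2^2"

lemma mat2_nth [simp]:
  "mat2 a b c d $ 1 $ 1 = a" "mat2 a b c d $ 1 $ 2 = b"
  "mat2 a b c d $ 2 $ 1 = c" "mat2 a b c d $ 2 $ 2 = d"
  by (simp_all add: mat2_def)

lemma mat2_cases:
  obtains a b c d where "(X::cmat2) = mat2 a b c d"
proof
  show "X = mat2 (X$1$1) (X$1$2) (X$2$1) (X$2$2)"
    by (simp add: vec_eq_iff forall_2)
qed

lemma mat2_eq_iff: "mat2 a b c d = mat2 a' b' c' d' \<longleftrightarrow> a = a' \<and> b = b' \<and> c = c' \<and> d = d'"
  by (metis mat2_nth)

lemma mat2_mult [simp]:
  "mat2 a b c d ** mat2 e f g h = mat2 (a*e + b*g) (a*f + b*h) (c*e + d*g) (c*f + d*h)"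
  by (simp add: matrix_matrix_mult_def vec_eq_iff forall_2 sum_2)

lemma mat2_mult_vector:
  "mat2 a b c d *v v = vector [a * v$1 + b * v$2, c * v$1 + d * v$2]"
  by (simp add: matrix_vector_mult_def vec_eq_iff forall_2 sum_2)

lemma mat_1_eq_mat2: "(mat 1 :: cmat2) = mat2 1 0 0 1"
  by (simp add: vec_eq_iff forall_2 mat_def)

lemma trace_mat2 [simp]: "trace (mat2 a b c d) = a + d"
  by (simp add: trace_def sum_2)

lemma det_mat2 [simp]: "det (mat2 a b c d) = a * d - b * c"
  by (simp add: det_2)

lemma matrix_inv_right_left:
  "invertible A \<Longrightarrow> A ** matrix_inv A = mat 1 \<and> matrix_inv A ** A = mat 1"
  unfolding invertible_def matrix_inv_def by (rule someI_ex)

lemma matrix_inv_eqI: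
  fixes A B :: "'a::semiring_1^'n^'n"
  assumes AB: "A ** B = mat 1" and BA: "B ** A = mat 1"
  shows "matrix_inv A = B"
proof -
  have inv: "matrix_inv A ** A = mat 1"
    using matrix_inv_right_left[of A] AB BA unfolding invertible_def by blast
  have "matrix_inv A = matrix_inv A ** (A ** B)"
    by (simp add: AB)
  also have "\<dots> = B"
    by (simp add: matrix_mul_assoc inv)
  finally show ?thesis .
qed

lemma matrix_inv_mult:
  fixes A B :: "'a::field^'n^'n"
  assumes "invertible A" "invertible B"
  shows "matrix_inv (A ** B) = matrix_inv B ** matrix_inv A"
proof (rule matrix_inv_eqI)
  note A = matrix_inv_right_left[OF assms(1)] and B = matrix_inv_right_left[OF assms(2)]
  have "A ** B ** (matrix_inv B ** matrix_inv A) = A ** (B ** matrix_inv B) ** matrix_inv A"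
    by (simp only: matrix_mul_assoc)
  then show "A ** B ** (matrix_inv B ** matrix_inv A) = mat 1"
    using A B by simp
  have "matrix_inv B ** matrix_inv A ** (A ** B) = matrix_inv B ** (matrix_inv A ** A) ** B"
    by (simp only: matrix_mul_assoc)
  then show "matrix_inv B ** matrix_inv A ** (A ** B) = mat 1"
    using A B by simp
qed

lemma matrix_inv_mat2:
  assumes "a * d - b * c \<noteq> 0"
  shows "matrix_inv (mat2 a b c d) =
    mat2 (d / (a*d - b*c)) (- b / (a*d - b*c)) (- c / (a*d - b*c)) (a / (a*d - b*c))"
proof -
  define e where "e = inverse (a*d - b*c)"
  have e: "(a*d - b*c) * e = 1"
    using assms unfolding e_def by simp
  show ?thesis
    unfolding divide_inverse e_def[symmetric]
  proof (rule matrix_inv_eqI)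
    show "mat2 a b c d ** mat2 (d * e) (- b * e) (- c * e) (a * e) = mat 1"
      unfolding mat2_mult mat_1_eq_mat2 mat2_eq_iff using e by (simp add: algebra_simps)
    show "mat2 (d * e) (- b * e) (- c * e) (a * e) ** mat2 a b c d = mat 1"
      unfolding mat2_mult mat_1_eq_mat2 mat2_eq_iff using e by (simp add: algebra_simps)
  qed
qed

lemma det_matrix_inv:
  fixes A :: "cmat2"
  assumes "det A \<noteq> 0"
  shows "det (matrix_inv A) = inverse (det A)"
  using matrix_inv_right_left[of A] det_mul[of A "matrix_inv A"] assms
  by (simp add: invertible_det_nz field_simps)

definition commutator :: "cmat2 \<Rightarrow> cmat2 \<Rightarrow> cmat2" where
  "commutator A B = A ** B ** matrix_inv A ** matrix_inv B"

lemma det_commutator: "det A \<noteq> 0 \<Longrightarrow> det B \<noteq> 0 \<Longrightarrow> det (commutator A B) = 1"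
  by (simp add: commutator_def det_mul det_matrix_inv field_simps)

lemma commutator_eq_1_imp_commute:
  assumes "commutator A B = mat 1" "det A \<noteq> 0" "det B \<noteq> 0"
  shows "A ** B = B ** A"
proof -
  have "commutator A B ** (B ** A) = A ** B ** (matrix_inv A ** (matrix_inv B ** B) ** A)"
    unfolding commutator_def by (simp only: matrix_mul_assoc)
  also have "\<dots> = A ** B"
    using matrix_inv_right_left[of A] matrix_inv_right_left[of B] assms(2,3)
    by (simp add: invertible_det_nz)
  finally have "commutator A B ** (B ** A) = A ** B" .
  then show ?thesis
    using assms(1) by simp
qed

text \<open>Fricke's identity, with the determinants cleared.\<close>
lemma trace_commutator:
  assumes "det A \<noteq> 0" "det B \<noteq> 0"
  shows "trace (commutator A B) * (det A * det B) =
    trace A ^ 2 * det B + trace B ^ 2 * det A + trace (A ** B) ^ 2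
    - trace A * trace B * trace (A ** B) - 2 * det A * det B"
proof -
  obtain a b c d where A: "A = mat2 a b c d" by (rule mat2_cases)
  obtain p q r t where B: "B = mat2 p q r t" by (rule mat2_cases)
  define e where "e = inverse (a*d - b*c)"
  define f where "f = inverse (p*t - q*r)"
  have e: "(a*d - b*c) * e = 1" and f: "(p*t - q*r) * f = 1"
    using assms unfolding A B e_def f_def by simp_all
  have dA: "a*d - b*c \<noteq> 0" and dB: "p*t - q*r \<noteq> 0"
    using assms unfolding A B by simp_all
  show ?thesis
    unfolding A B commutator_def matrix_inv_mat2[OF dA] matrix_inv_mat2[OF dB] divide_inverse
      e_def[symmetric] f_def[symmetric] mat2_mult trace_mat2 det_mat2
    using e f by algebra
qed

primrec mat_pow :: "'a::semiring_1^'n^'n \<Rightarrow> nat \<Rightarrow> 'a^'n^'n" where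
  "mat_pow X 0 = mat 1"
| "mat_pow X (Suc k) = mat_pow X k ** X"

lemma trace_mult_square:
  fixes P X :: cmat2
  shows "trace (P ** X ** X) = trace X * trace (P ** X) - det X * trace P"
proof -
  obtain a b c d where "X = mat2 a b c d" by (rule mat2_cases)
  moreover obtain p q r t where "P = mat2 p q r t" by (rule mat2_cases)
  ultimately show ?thesis by (simp add: algebra_simps)
qed

lemma trace_mat_pow:
  fixes X :: cmat2
  assumes "l1 + l2 = trace X" "l1 * l2 = det X"
  shows "trace (mat_pow X k) = l1 ^ k + l2 ^ k"
proof (induction k rule: induct_nat_012)
  case (ge2 k)
  have "trace (mat_pow X (Suc (Suc k))) = trace X * trace (mat_pow X (Suc k)) - det X * trace (mat_pow X k)"
    using trace_mult_square by simp
  then show ?case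
    using ge2 by (simp add: algebra_simps flip: assms)
qed (use assms in \<open>simp_all add: trace_I\<close>)

lemma exists_sum_prod_eq: "\<exists>l1 l2. l1 + l2 = t \<and> l1 * l2 = (d::complex)"
proof -
  define w where "w = csqrt (t^2 - 4*d)"
  have "w^2 = t^2 - 4*d"
    unfolding w_def by simp
  then show ?thesis
    by (intro exI[of _ "(t+w)/2"] exI[of _ "(t-w)/2"]) (auto simp: field_simps power2_eq_square)
qed

lemma mat2_eigenvector_iff:
  "mat2 a b c d *v v = l *s v \<longleftrightarrow> (a - l) * v$1 + b * v$2 = 0 \<and> c * v$1 + (d - l) * v$2 = 0"
  unfolding mat2_mult_vector by (auto simp: vec_eq_iff forall_2 algebra_simps)

lemma vector_2_eq_0_iff: "vector [x, y] = (0::complex^2) \<longleftrightarrow> x = 0 \<and> y = 0"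
  by (auto simp: vec_eq_iff forall_2)

lemma char_root_if_eigenvector:
  fixes X :: cmat2
  assumes "v \<noteq> 0" "X *v v = l *s v"
  shows "l^2 - trace X * l + det X = 0"
proof -
  obtain a b c d where X: "X = mat2 a b c d"
    by (rule mat2_cases)
  have "(a - l) * v$1 + b * v$2 = 0" "c * v$1 + (d - l) * v$2 = 0"
    using assms(2) unfolding X mat2_eigenvector_iff by simp_all
  then have "((a - l) * (d - l) - b * c) * v$1 = 0" "((a - l) * (d - l) - b * c) * v$2 = 0"
    by algebra+
  moreover have "v$1 \<noteq> 0 \<or> v$2 \<noteq> 0"
    using assms(1) by (auto simp: vec_eq_iff forall_2)
  ultimately have "(a - l) * (d - l) - b * c = 0"
    by auto
  then show ?thesis
    unfolding X power2_eq_square by simp algebra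
qed

lemma eigenvector_if_char_root:
  fixes X :: cmat2
  assumes "l^2 - trace X * l + det X = 0"
  shows "\<exists>v. v \<noteq> 0 \<and> X *v v = l *s v"
proof -
  obtain a b c d where X: "X = mat2 a b c d"
    by (rule mat2_cases)
  have eig: "X *v v = l' *s v \<longleftrightarrow> (a - l') * v$1 + b * v$2 = 0 \<and> c * v$1 + (d - l') * v$2 = 0"
    for v l'
    unfolding X by (rule mat2_eigenvector_iff)
  have char: "(a - l) * (d - l) = b * c"
    using assms unfolding X by (simp add: algebra_simps power2_eq_square)
  consider "b \<noteq> 0" | "c \<noteq> 0" | "b = 0" "c = 0" "l = a" | "b = 0" "c = 0" "l = d"
    using char by (cases "b = 0"; cases "c = 0") auto
  then show ?thesis
  proof cases
    case 1
    have "(a - l) * b + b * (l - a) = 0"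
      by algebra
    moreover have "c * b + (d - l) * (l - a) = 0"
      using char by algebra
    ultimately show ?thesis
      using 1 by (intro exI[of _ "vector [b, l - a]"]) (simp add: eig vector_2_eq_0_iff)
  next
    case 2
    have "(a - l) * (l - d) + b * c = 0"
      using char by algebra
    moreover have "c * (l - d) + (d - l) * c = 0"
      by algebra
    ultimately show ?thesis
      using 2 by (intro exI[of _ "vector [l - d, c]"]) (simp add: eig vector_2_eq_0_iff)
  next
    case 3
    then show ?thesis
      by (intro exI[of _ "vector [1, 0]"]) (simp add: eig vector_2_eq_0_iff)
  next
    case 4
    then show ?thesis
      by (intro exI[of _ "vector [0, 1]"]) (simp add: eig vector_2_eq_0_iff)
  qed
qed

section \<open>The specialised groups\<close>

lemma gens_mat2:
  "Rq z = mat2 z 1 0 1" "Rq_inv z = mat2 (inverse z) (- inverse z) 0 1"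
  "Sq z = mat2 0 (- inverse z) 1 0" "Sq_inv z = mat2 0 1 (- z) 0"
  by (simp_all add: Rq_def Rq_inv_def Sq_def Sq_inv_def)

definition gens_at :: "complex \<Rightarrow> cmat2 set" where
  "gens_at z = {Rq z, Rq_inv z, Sq z, Sq_inv z}"

lemma Gq_at_mult_gen:
  assumes "X \<in> Gq_at z" "g \<in> gens_at z"
  shows "X ** g \<in> Gq_at z"
proof -
  obtain M where M: "M \<in> Gq" "X = M z"
    using assms(1) unfolding Gq_at_def by auto
  have "(\<lambda>q. M q ** Rq q) \<in> Gq" "(\<lambda>q. M q ** Rq_inv q) \<in> Gq"
    "(\<lambda>q. M q ** Sq q) \<in> Gq" "(\<lambda>q. M q ** Sq_inv q) \<in> Gq"
    using M(1) by (rule Gq.intros)+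
  then show ?thesis
    using assms(2) unfolding M(2) Gq_at_def gens_at_def by (fastforce simp: image_iff)
qed

lemma Gq_at_induct [consumes 1, case_names one step]:
  assumes "X \<in> Gq_at z"
    and base: "P (mat 1)"
    and step: "\<And>Y g. Y \<in> Gq_at z \<Longrightarrow> P Y \<Longrightarrow> g \<in> gens_at z \<Longrightarrow> P (Y ** g)"
  shows "P X"
proof -
  obtain M where M: "M \<in> Gq" "X = M z"
    using assms(1) unfolding Gq_at_def by auto
  have in_Gq_at: "N z \<in> Gq_at z" if "N \<in> Gq" for N
    using that unfolding Gq_at_def by blast
  from M(1) have "P (M z)"
    by induction (auto intro!: base step simp: in_Gq_at gens_at_def)
  then show ?thesis
    using M(2) by simp
qed

lemma mat_1_in_Gq_at: "mat 1 \<in> Gq_at z"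
  unfolding Gq_at_def using Gq.one by force

lemma gens_at_subset_Gq_at: "gens_at z \<subseteq> Gq_at z"
  using Gq_at_mult_gen[OF mat_1_in_Gq_at] by auto

lemma Gq_at_mult:
  assumes "X \<in> Gq_at z" "Y \<in> Gq_at z"
  shows "X ** Y \<in> Gq_at z"
  using assms(2)
proof (induction Y rule: Gq_at_induct)
  case one
  then show ?case using assms(1) by simp
next
  case (step Y g)
  then show ?case
    using Gq_at_mult_gen by (metis matrix_mul_assoc)
qed

lemma Gq_at_mat_pow: "X \<in> Gq_at z \<Longrightarrow> mat_pow X k \<in> Gq_at z"
  by (induction k) (auto intro: Gq_at_mult mat_1_in_Gq_at)

lemma gens_at_invertible:
  assumes "z \<noteq> 0" "g \<in> gens_at z"
  shows "det g \<noteq> 0" "matrix_inv g \<in> gens_at z"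
proof -
  have "Rq_inv z ** Rq z = mat 1" "Sq_inv z ** Sq z = mat 1"
    using assms(1) by (simp_all add: gens_mat2 mat_1_eq_mat2 field_simps)
  then have "matrix_inv (Rq z) = Rq_inv z" "matrix_inv (Rq_inv z) = Rq z"
    "matrix_inv (Sq z) = Sq_inv z" "matrix_inv (Sq_inv z) = Sq z"
    using Rq_inv_ok[OF assms(1)] Sq_inv_ok[OF assms(1)] by (auto intro: matrix_inv_eqI)
  then show "matrix_inv g \<in> gens_at z"
    using assms(2) by (auto simp: gens_at_def)
  show "det g \<noteq> 0"
    using assms by (auto simp: gens_at_def gens_mat2)
qed

lemma Gq_at_invertible:
  assumes "z \<noteq> 0" "X \<in> Gq_at z"
  shows "det X \<noteq> 0 \<and> matrix_inv X \<in> Gq_at z"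
  using assms(2)
proof (induction X rule: Gq_at_induct)
  case one
  have "matrix_inv (mat 1 :: cmat2) = mat 1"
    by (simp add: matrix_inv_eqI)
  then show ?case
    by (simp add: mat_1_in_Gq_at)
next
  case (step Y g)
  note g = gens_at_invertible[OF assms(1) \<open>g \<in> gens_at z\<close>]
  have "matrix_inv (Y ** g) = matrix_inv g ** matrix_inv Y"
    using step g by (simp add: matrix_inv_mult invertible_det_nz)
  then show ?case
    using step g gens_at_subset_Gq_at by (auto simp: det_mul intro: Gq_at_mult)
qed

lemma Gq_at_commutator:
  "z \<noteq> 0 \<Longrightarrow> A \<in> Gq_at z \<Longrightarrow> B \<in> Gq_at z \<Longrightarrow> commutator A B \<in> Gq_at z"
  unfolding commutator_def by (intro Gq_at_mult) (auto dest: Gq_at_invertible)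

lemma norm_det_Gq_at:
  assumes "cmod z = 1" "X \<in> Gq_at z"
  shows "cmod (det X) = 1"
  using assms(2)
proof (induction X rule: Gq_at_induct)
  case one
  then show ?case by (simp add: mat_1_eq_mat2)
next
  case (step Y g)
  then show ?case
    using assms(1) by (auto simp: gens_at_def gens_mat2 det_mul norm_mult norm_inverse)
qed

section \<open>Roots of unity\<close>

lemma root_of_unity_power_mod: "w ^ n = 1 \<Longrightarrow> w ^ (m mod n) = (w::complex) ^ m"
  by (metis div_mult_mod_eq mult.commute mult_1 power_add power_mult power_one)

lemma primitive_root_of_unity_power_eq_1_iff:
  assumes "primitive_root_of_unity n \<zeta>"
  shows "\<zeta> ^ m = 1 \<longleftrightarrow> n dvd m"
proof
  assume "\<zeta> ^ m = 1"
  then have "\<zeta> ^ (m mod n) = 1"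
    using assms root_of_unity_power_mod unfolding primitive_root_of_unity_def by metis
  moreover have "m mod n < n"
    using assms unfolding primitive_root_of_unity_def by simp
  ultimately show "n dvd m"
    using assms unfolding primitive_root_of_unity_def by (metis dvd_eq_mod_eq_0 less_one not_less)
next
  assume "n dvd m"
  then show "\<zeta> ^ m = 1"
    using assms unfolding primitive_root_of_unity_def by (auto simp: power_mult)
qed

lemma primitive_root_of_unity_power_root: "primitive_root_of_unity n \<zeta> \<Longrightarrow> (\<zeta> ^ j) ^ n = 1"
  unfolding primitive_root_of_unity_def by (metis mult.commute power_mult power_one)

lemma sum_powers_primitive_root_of_unity:
  assumes "primitive_root_of_unity n \<zeta>"
  shows "(\<Sum>j<n. (\<zeta> ^ m) ^ j) = (if n dvd m then of_nat n else 0)"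
proof (cases "n dvd m")
  case True
  then have "\<zeta> ^ m = 1"
    using primitive_root_of_unity_power_eq_1_iff[OF assms] by simp
  then show ?thesis
    using True by simp
next
  case False
  then have "\<zeta> ^ m \<noteq> 1"
    using primitive_root_of_unity_power_eq_1_iff[OF assms] by simp
  moreover have "(\<zeta> ^ m) ^ n = 1"
    using primitive_root_of_unity_power_root[OF assms] .
  ultimately show ?thesis
    using False by (simp add: geometric_sum)
qed

lemma power_diff_eq_1_if_power_eq:
  fixes z :: complex
  assumes "z \<noteq> 0" "i \<le> j" "z ^ i = z ^ j"
  shows "z ^ (j - i) = 1"
proof -
  have "z ^ i * z ^ (j - i) = z ^ j"
    using assms(2) by (simp flip: power_add)
  then show ?thesis
    using assms(1,3) by simp
qed

lemma primitive_root_of_unity_exists: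
  assumes "0 < m" "z ^ m = 1"
  obtains n where "primitive_root_of_unity n z"
proof -
  define n where "n = (LEAST k. 0 < k \<and> z ^ k = 1)"
  have "0 < n" "z ^ n = 1"
    using LeastI[of "\<lambda>k. 0 < k \<and> z ^ k = 1" m] assms unfolding n_def by simp_all
  moreover have "z ^ k \<noteq> 1" if "1 \<le> k" "k < n" for k
    using not_less_Least[of k "\<lambda>k. 0 < k \<and> z ^ k = 1"] that unfolding n_def by auto
  ultimately have "primitive_root_of_unity n z"
    unfolding primitive_root_of_unity_def by auto
  then show ?thesis
    by (rule that)
qed

lemma primitive_root_of_unity_power_eq_cis:
  assumes \<zeta>: "primitive_root_of_unity n \<zeta>"
  shows "\<exists>m. \<zeta> ^ m = cis (2 * pi / n)"
proof -
  have n: "0 < n"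
    using \<zeta> unfolding primitive_root_of_unity_def by simp
  have "inj_on (\<lambda>i. \<zeta> ^ i) {..<n}"
  proof (rule inj_onI)
    fix i j assume ij: "i \<in> {..<n}" "j \<in> {..<n}" "\<zeta> ^ i = \<zeta> ^ j"
    have "\<zeta> \<noteq> 0"
      using \<zeta> n unfolding primitive_root_of_unity_def by (metis power_0_left not_gr0 zero_neq_one)
    have "i = j" if "i < j" "j < n" "\<zeta> ^ i = \<zeta> ^ j" for i j
    proof -
      have "n dvd j - i"
        using power_diff_eq_1_if_power_eq[OF \<open>\<zeta> \<noteq> 0\<close> _ that(3)] that(1)
          primitive_root_of_unity_power_eq_1_iff[OF \<zeta>] by simp
      then show ?thesis
        using that nat_dvd_not_less[of "j - i" n] by simp
    qed
    then show "i = j"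
      using ij by (metis lessThan_iff linorder_neqE_nat)
  qed
  then have card: "card ((\<lambda>i. \<zeta> ^ i) ` {..<n}) = card {w::complex. w ^ n = 1}"
    by (simp add: card_image card_roots_unity_eq[OF n])
  have "(\<zeta> ^ i) ^ n = 1" for i
    using \<zeta> by (rule primitive_root_of_unity_power_root)
  then have "(\<lambda>i. \<zeta> ^ i) ` {..<n} \<subseteq> {w. w ^ n = 1}"
    by auto
  then have "(\<lambda>i. \<zeta> ^ i) ` {..<n} = {w. w ^ n = 1}"
    using card n by (intro card_subset_eq) auto
  moreover have "cis (2 * pi / n) ^ n = cis (real n * (2 * pi / n))"
    by (rule Complex.DeMoivre)
  then have "cis (2 * pi / n) ^ n = 1"
    using n by (simp add: complex_eq_iff)
  ultimately have "cis (2 * pi / n) \<in> (\<lambda>i. \<zeta> ^ i) ` {..<n}"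
    by simp
  then show ?thesis
    by (metis imageE)
qed

lemma primitive_root_of_unity_sixth:
  assumes \<zeta>: "primitive_root_of_unity n \<zeta>" and "\<zeta>^2 - \<zeta> + 1 = 0"
  shows "n \<le> 6"
proof -
  have "\<zeta> ^ 3 + 1 = (\<zeta> + 1) * (\<zeta>^2 - \<zeta> + 1)"
    by (simp add: algebra_simps power2_eq_square power3_eq_cube)
  then have "\<zeta> ^ 3 = -1"
    using assms(2) by (simp add: add_eq_0_iff2)
  moreover have "\<zeta> ^ 6 = (\<zeta> ^ 3) ^ 2"
    by (simp flip: power_mult)
  ultimately have "n dvd 6"
    using primitive_root_of_unity_power_eq_1_iff[OF \<zeta>] by simp
  then show ?thesis
    by (simp add: dvd_imp_le)
qed

lemma cos_2pi_div_bounds: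
  fixes n :: nat
  assumes "7 \<le> n"
  shows "1/2 < cos (2 * pi / n)" "cos (2 * pi / n) < 1"
proof -
  have "0 < 2 * pi / n" "2 * pi / n < pi / 3"
    using assms pi_gt_zero by (simp_all add: field_simps)
  then show "1/2 < cos (2 * pi / n)" "cos (2 * pi / n) < 1"
    using cos_monotone_0_pi[of "2 * pi / n" "pi / 3"] cos_monotone_0_pi[of 0 "2 * pi / n"]
    by (simp_all add: cos_60)
qed

lemma Re_root_of_unity_le_half:
  assumes "w ^ n = 1" "w \<noteq> 1" "0 < n" "n \<le> 6"
  shows "Re w \<le> 1/2"
proof -
  obtain k where k: "k < n" "w = cis (2 * pi * real k / real n)"
    using Complex.bij_betw_roots_unity[OF assms(3)] assms(1) unfolding bij_betw_def by auto
  define \<theta> where "\<theta> = 2 * pi * real k / real n"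
  have "k \<noteq> 0"
  proof
    assume "k = 0"
    then have "w = 1"
      using k(2) by simp
    then show False
      using assms(2) by simp
  qed
  then have "real n \<le> 6 * real k" "real k + 1 \<le> real n"
    using k(1) assms(4) by linarith+
  then have \<theta>_lower: "pi / 3 \<le> \<theta>" and \<theta>_upper: "\<theta> \<le> 2 * pi - pi / 3"
    using assms(3,4) pi_gt_zero unfolding \<theta>_def by (simp_all add: field_simps)
  have "cos \<theta> \<le> cos (pi / 3)"
  proof (cases "\<theta> \<le> pi")
    case True
    then show ?thesis
      using \<theta>_lower by (subst cos_mono_le_eq) auto
  next
    case False
    then have "cos (2 * pi - \<theta>) \<le> cos (pi / 3)"
      using \<theta>_upper by (subst cos_mono_le_eq) auto
    then show ?thesis
      by simp
  qed
  then show ?thesis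
    using k(2) unfolding \<theta>_def by (simp add: cos_60)
qed

section \<open>Traces at roots of unity of order at most six are bounded\<close>

lemma norm_eq_1_iff_mult_cnj: "cmod z = 1 \<longleftrightarrow> z * cnj z = 1"
proof -
  have "cmod z = 1 \<longleftrightarrow> (cmod z)^2 = 1^2"
    by (rule power2_eq_iff_nonneg[symmetric]) simp_all
  also have "\<dots> \<longleftrightarrow> z * cnj z = 1"
    by (metis complex_norm_square of_real_eq_1_iff power_one)
  finally show ?thesis .
qed

lemma cnj_eq_inverse_if_norm_1: "cmod z = 1 \<Longrightarrow> cnj z = inverse z"
  by (simp add: norm_eq_1_iff_mult_cnj inverse_unique)

lemma norm_trace_le_2_of_unimodular_eigenvalue:
  fixes X :: cmat2
  assumes "l^2 - trace X * l + det X = 0" "cmod l = 1" "cmod (det X) = 1"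
  shows "cmod (trace X) \<le> 2"
proof -
  have "l \<noteq> 0"
    using assms(2) by auto
  then have "trace X = l + det X / l"
    using assms(1) by (simp add: field_simps power2_eq_square)
  then show ?thesis
    using assms(2,3) norm_triangle_ineq[of l "det X / l"] by (simp add: norm_divide)
qed

text \<open>For \<open>cmod w = 1\<close> the form \<open>|v1|^2 + |v2|^2 + 2 Re (cnj v1 \<beta> v2)\<close> with
  \<open>\<beta> = 1 / (w - 1)\<close> is invariant under \<open>G_q(w)\<close>; it is definite when \<open>cmod \<beta> < 1\<close>,
  i.e. when \<open>Re w < 1/2\<close>.\<close>
definition herm_form :: "complex \<Rightarrow> complex^2 \<Rightarrow> complex" where
  "herm_form \<beta> v =
    v$1 * cnj (v$1) + v$2 * cnj (v$2) + cnj (v$1) * \<beta> * v$2 + v$1 * cnj \<beta> * cnj (v$2)"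

lemma herm_form_smult: "herm_form \<beta> (l *s v) = l * cnj l * herm_form \<beta> v"
  by (simp add: herm_form_def algebra_simps)

lemma Re_herm_form_pos:
  assumes "cmod \<beta> < 1" "v \<noteq> 0"
  shows "Re (herm_form \<beta> v) > 0"
proof -
  define a b where "a = v$1" and "b = v$2"
  define s where "s = (cmod a)^2 + (cmod b)^2"
  have Re_eq: "Re (herm_form \<beta> v) = s + 2 * Re (cnj a * \<beta> * b)"
    unfolding herm_form_def a_def b_def s_def cmod_power2 by (simp add: algebra_simps power2_eq_square)
  have "- Re (cnj a * \<beta> * b) \<le> cmod a * cmod b * cmod \<beta>"
    using abs_Re_le_cmod[of "cnj a * \<beta> * b"] by (simp add: norm_mult mult_ac)
  moreover have "2 * (cmod a * cmod b) * cmod \<beta> \<le> s * cmod \<beta>"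
    using zero_le_power2[of "cmod a - cmod b"] unfolding s_def
    by (intro mult_right_mono) (simp_all add: power2_eq_square algebra_simps)
  moreover have "a \<noteq> 0 \<or> b \<noteq> 0"
    using assms(2) unfolding a_def b_def by (auto simp: vec_eq_iff forall_2)
  then have "0 < s * (1 - cmod \<beta>)"
    using assms(1) unfolding s_def by (auto simp: add_pos_nonneg add_nonneg_pos)
  ultimately show ?thesis
    unfolding Re_eq by (simp add: algebra_simps)
qed

lemma herm_form_gens_invariant:
  assumes w: "cmod w = 1" "w \<noteq> 1" and g: "g \<in> gens_at w"
  shows "herm_form (inverse (w - 1)) (g *v v) = herm_form (inverse (w - 1)) v"
proof -
  define \<beta> where "\<beta> = inverse (w - 1)"
  have w0: "w \<noteq> 0"
    using w by auto
  have cnj_w: "cnj w = inverse w"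
    using w(1) by (rule cnj_eq_inverse_if_norm_1)
  have w_inv: "w * inverse w = 1" and \<beta>: "(w - 1) * \<beta> = 1"
    using w w0 unfolding \<beta>_def by simp_all
  have cnj_\<beta>: "cnj \<beta> = - (w * \<beta>)"
    using w w0 unfolding \<beta>_def by (simp add: cnj_w field_simps)
  have R: "herm_form \<beta> (Rq w *v u) = herm_form \<beta> u" for u
    unfolding herm_form_def gens_mat2 mat2_mult_vector vector_2
    by (simp add: cnj_\<beta> cnj_w) (use w_inv \<beta> in algebra)
  have S: "herm_form \<beta> (Sq w *v u) = herm_form \<beta> u" for u
    unfolding herm_form_def gens_mat2 mat2_mult_vector vector_2
    by (simp add: cnj_\<beta> cnj_w) (use w_inv \<beta> in algebra)
  have "herm_form \<beta> (Rq_inv w *v u) = herm_form \<beta> u" for u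
    using R[of "Rq_inv w *v u"] Rq_inv_ok[OF w0] by (simp add: matrix_vector_mul_assoc)
  moreover have "herm_form \<beta> (Sq_inv w *v u) = herm_form \<beta> u" for u
    using S[of "Sq_inv w *v u"] Sq_inv_ok[OF w0] by (simp add: matrix_vector_mul_assoc)
  ultimately show ?thesis
    using g R S unfolding \<beta>_def gens_at_def by auto
qed

lemma herm_form_Gq_at_invariant:
  assumes "cmod w = 1" "w \<noteq> 1" "X \<in> Gq_at w"
  shows "herm_form (inverse (w - 1)) (X *v v) = herm_form (inverse (w - 1)) v"
  using assms(3)
proof (induction X arbitrary: v rule: Gq_at_induct)
  case one
  then show ?case by simp
next
  case (step Y g)
  then show ?case
    using herm_form_gens_invariant[OF assms(1,2)] by (simp flip: matrix_vector_mul_assoc)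
qed

lemma norm_trace_Gq_at_le_2_if_Re_less:
  assumes w: "cmod w = 1" "Re w < 1/2" and X: "X \<in> Gq_at w"
  shows "cmod (trace X) \<le> 2"
proof -
  define \<beta> where "\<beta> = inverse (w - 1)"
  have "(cmod (w - 1))^2 = (cmod w)^2 - 2 * Re w + 1"
    unfolding cmod_power2 by (simp add: power2_eq_square algebra_simps)
  then have "(cmod (w - 1))^2 = 2 - 2 * Re w"
    using w(1) by simp
  then have "1^2 < (cmod (w - 1))^2"
    using w(2) by simp
  then have "1 < cmod (w - 1)"
    by (rule power2_less_imp_less) simp
  then have \<beta>_less: "cmod \<beta> < 1"
    unfolding \<beta>_def by (simp add: norm_inverse inverse_less_1_iff)
  obtain l l' where l: "l + l' = trace X" "l * l' = det X"
    using exists_sum_prod_eq by blast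
  then have char: "l^2 - trace X * l + det X = 0"
    by (simp add: power2_eq_square algebra_simps flip: l)
  then obtain v where v: "v \<noteq> 0" "X *v v = l *s v"
    using eigenvector_if_char_root by blast
  have "w \<noteq> 1"
    using w(2) by auto
  then have "l * cnj l * herm_form \<beta> v = herm_form \<beta> v"
    using herm_form_Gq_at_invariant[OF w(1) _ X, of v] v(2) by (simp add: \<beta>_def herm_form_smult)
  moreover have "herm_form \<beta> v \<noteq> 0"
    using Re_herm_form_pos[OF \<beta>_less v(1)] by auto
  ultimately have "cmod l = 1"
    by (simp add: norm_eq_1_iff_mult_cnj)
  then show ?thesis
    using norm_trace_le_2_of_unimodular_eigenvalue[OF char] norm_det_Gq_at[OF w(1) X] by simp
qed

lemma Gq_at_common_eigenvector:
  assumes w: "w^2 - w + 1 = 0" "cmod w = 1" and X: "X \<in> Gq_at w"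
  shows "\<exists>c. cmod c = 1 \<and> X *v vector [1, 1 - w] = c *s vector [1, 1 - w]"
proof -
  define v where "v = (vector [1, 1 - w] :: complex^2)"
  have w0: "w \<noteq> 0"
    using w(2) by auto
  have w2: "w^2 = w - 1"
    using w(1) by algebra
  then have "1 - w = - (w^2)"
    by simp
  then have norm_1_w: "cmod (1 - w) = 1"
    using w(2) by (simp add: norm_power)
  have gen: "\<exists>c. cmod c = 1 \<and> g *v v = c *s v" if "g \<in> gens_at w" for g
  proof -
    have "Rq w *v v = 1 *s v" "Rq_inv w *v v = 1 *s v" "Sq w *v v = w *s v"
      "Sq_inv w *v v = (1 - w) *s v"
      using w0 w2 unfolding v_def gens_mat2 mat2_mult_vector
      by (auto simp: vec_eq_iff forall_2 field_simps power2_eq_square)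
    then show ?thesis
      using that w(2) norm_1_w norm_one unfolding gens_at_def by blast
  qed
  have "\<exists>c. cmod c = 1 \<and> X *v v = c *s v"
    using X
  proof (induction X rule: Gq_at_induct)
    case one
    then show ?case by (intro exI[of _ 1]) simp
  next
    case (step Y g)
    then obtain c c' where "cmod c = 1" "Y *v v = c *s v" "cmod c' = 1" "g *v v = c' *s v"
      using gen by blast
    then show ?case
      by (intro exI[of _ "c' * c"])
        (simp add: norm_mult vector_scalar_commute flip: matrix_vector_mul_assoc)
  qed
  then show ?thesis
    unfolding v_def .
qed

lemma norm_trace_Gq_at_le_2_if_sixth_root:
  assumes w: "w^2 - w + 1 = 0" "cmod w = 1" and X: "X \<in> Gq_at w"
  shows "cmod (trace X) \<le> 2"
proof -
  obtain c where c: "cmod c = 1" "X *v vector [1, 1 - w] = c *s vector [1, 1 - w]"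
    using Gq_at_common_eigenvector[OF w X] by blast
  have "vector [1, 1 - w] \<noteq> (0 :: complex^2)"
    by (simp add: vector_2_eq_0_iff)
  then have "c^2 - trace X * c + det X = 0"
    using c(2) by (rule char_root_if_eigenvector)
  then show ?thesis
    using norm_trace_le_2_of_unimodular_eigenvalue c(1) norm_det_Gq_at[OF w(2) X] by blast
qed

lemma norm_trace_Gq_at_le_2_if_root_of_unity:
  assumes "w ^ n = 1" "w \<noteq> 1" "0 < n" "n \<le> 6" "X \<in> Gq_at w"
  shows "cmod (trace X) \<le> 2"
proof -
  have norm_w: "cmod w = 1"
    using power_eq_1_iff[OF assms(1)] assms(3) by auto
  consider "Re w < 1/2" | "Re w = 1/2"
    using Re_root_of_unity_le_half[OF assms(1-4)] by linarith
  then show ?thesis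
  proof cases
    case 1
    then show ?thesis
      using norm_trace_Gq_at_le_2_if_Re_less[OF norm_w _ assms(5)] by blast
  next
    case 2
    have "w * cnj w = 1"
      using norm_w by (simp add: norm_eq_1_iff_mult_cnj)
    moreover have "w + cnj w = 1"
      unfolding complex_add_cnj 2 by simp
    ultimately
    have "w^2 - w + 1 = 0"
      by algebra
    then show ?thesis
      using norm_trace_Gq_at_le_2_if_sixth_root[OF _ norm_w assms(5)] by blast
  qed
qed

section \<open>Integer polynomials on the roots of unity\<close>

definition int_poly_on_roots :: "nat \<Rightarrow> (complex \<Rightarrow> complex) \<Rightarrow> bool" where
  "int_poly_on_roots n f \<longleftrightarrow>
    (\<exists>a::nat \<Rightarrow> int. \<forall>w. w ^ n = 1 \<longrightarrow> f w = (\<Sum>k<n. of_int (a k) * w ^ k))"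

lemma int_poly_on_rootsI:
  assumes "0 < n" "finite S" "\<And>w. w ^ n = 1 \<Longrightarrow> f w = (\<Sum>x\<in>S. of_int (c x) * w ^ e x)"
  shows "int_poly_on_roots n f"
proof -
  define a where "a k = (\<Sum>x\<in>{x\<in>S. e x mod n = k}. c x)" for k
  have "f w = (\<Sum>k<n. of_int (a k) * w ^ k)" if w: "w ^ n = 1" for w
  proof -
    have "f w = (\<Sum>x\<in>S. of_int (c x) * w ^ (e x mod n))"
      using assms(3)[OF w] root_of_unity_power_mod[OF w] by simp
    also have "\<dots> = (\<Sum>k<n. \<Sum>x\<in>{x\<in>S. e x mod n = k}. of_int (c x) * w ^ (e x mod n))"
      by (rule sum.group[symmetric]) (use assms(1,2) in auto)
    also have "\<dots> = (\<Sum>k<n. of_int (a k) * w ^ k)"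
      unfolding a_def of_int_sum sum_distrib_right by (intro sum.cong) auto
    finally show ?thesis .
  qed
  then show ?thesis
    unfolding int_poly_on_roots_def by blast
qed

lemma int_poly_on_roots_monomial: "0 < n \<Longrightarrow> int_poly_on_roots n (\<lambda>w. of_int c * w ^ m)"
  by (rule int_poly_on_rootsI[where S = "{0::nat}" and c = "\<lambda>_. c" and e = "\<lambda>_. m"]) simp_all

lemma int_poly_on_roots_add:
  assumes "int_poly_on_roots n f" "int_poly_on_roots n g"
  shows "int_poly_on_roots n (\<lambda>w. f w + g w)"
proof -
  obtain a b where "\<forall>w. w ^ n = 1 \<longrightarrow> f w = (\<Sum>k<n. of_int (a k) * w ^ k)"
    "\<forall>w. w ^ n = 1 \<longrightarrow> g w = (\<Sum>k<n. of_int (b k) * w ^ k)"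
    using assms unfolding int_poly_on_roots_def by blast
  then show ?thesis
    unfolding int_poly_on_roots_def
    by (intro exI[of _ "\<lambda>k. a k + b k"]) (simp add: sum.distrib distrib_right)
qed

lemma int_poly_on_roots_mult:
  assumes "0 < n" "int_poly_on_roots n f" "int_poly_on_roots n g"
  shows "int_poly_on_roots n (\<lambda>w. f w * g w)"
proof -
  obtain a b where fa: "\<forall>w. w ^ n = 1 \<longrightarrow> f w = (\<Sum>k<n. of_int (a k) * w ^ k)"
    and gb: "\<forall>w. w ^ n = 1 \<longrightarrow> g w = (\<Sum>k<n. of_int (b k) * w ^ k)"
    using assms(2,3) unfolding int_poly_on_roots_def by blast
  have "f w * g w = (\<Sum>x\<in>{..<n} \<times> {..<n}. of_int (a (fst x) * b (snd x)) * w ^ (fst x + snd x))"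
    if "w ^ n = 1" for w
  proof -
    have "f w * g w = (\<Sum>i<n. \<Sum>j<n. of_int (a i * b j) * w ^ (i + j))"
      using that fa gb by (simp add: sum_product power_add mult_ac)
    then show ?thesis
      by (simp add: sum.cartesian_product case_prod_beta)
  qed
  then show ?thesis
    using int_poly_on_rootsI[OF assms(1), where S = "{..<n} \<times> {..<n}"
        and c = "\<lambda>x. a (fst x) * b (snd x)" and e = "\<lambda>x. fst x + snd x"] by simp
qed

lemma int_poly_on_roots_cong:
  "(\<And>w. w ^ n = 1 \<Longrightarrow> f w = g w) \<Longrightarrow> int_poly_on_roots n f \<longleftrightarrow> int_poly_on_roots n g"
  unfolding int_poly_on_roots_def by simp

lemma int_poly_on_roots_inverse:
  assumes n: "0 < n"
  shows "int_poly_on_roots n (\<lambda>w. of_int c * inverse w)"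
proof -
  have "inverse w = w ^ (n - 1)" if "w ^ n = 1" for w :: complex
  proof (rule inverse_unique)
    show "w * w ^ (n - 1) = 1"
      using that n by (simp flip: power_Suc)
  qed
  then have "int_poly_on_roots n (\<lambda>w. of_int c * inverse w) \<longleftrightarrow>
      int_poly_on_roots n (\<lambda>w. of_int c * w ^ (n - 1))"
    by (intro int_poly_on_roots_cong) simp
  then show ?thesis
    using int_poly_on_roots_monomial[OF n] by simp
qed

lemma int_poly_on_roots_Gq_entry:
  assumes n: "0 < n" and M: "M \<in> Gq"
  shows "int_poly_on_roots n (\<lambda>w. M w $ i $ j)"
proof -
  note monomial = int_poly_on_roots_monomial[OF n]
  note inverse = int_poly_on_roots_inverse[OF n]
  have basic: "int_poly_on_roots n (\<lambda>w. 0)" "int_poly_on_roots n (\<lambda>w. 1)"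
    "int_poly_on_roots n (\<lambda>w. w)" "int_poly_on_roots n (\<lambda>w. - w)"
    "int_poly_on_roots n (\<lambda>w. inverse w)" "int_poly_on_roots n (\<lambda>w. - inverse w)"
    using monomial[of 0 0] monomial[of 1 0] monomial[of 1 1] monomial[of "-1" 1]
      inverse[of 1] inverse[of "-1"] by simp_all
  have gen: "int_poly_on_roots n (\<lambda>w. G w $ i $ j)" if "G \<in> {Rq, Rq_inv, Sq, Sq_inv}" for G i j
    using that exhaust_2[of i] exhaust_2[of j] by (auto simp: gens_mat2 basic)
  have step: "int_poly_on_roots n (\<lambda>w. (N w ** G w) $ i $ j)"
    if N: "\<And>i j. int_poly_on_roots n (\<lambda>w. N w $ i $ j)" and G: "G \<in> {Rq, Rq_inv, Sq, Sq_inv}"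
    for N :: "complex \<Rightarrow> cmat2" and G i j
  proof -
    have "(\<lambda>w. (N w ** G w) $ i $ j) = (\<lambda>w. N w $ i $ 1 * G w $ 1 $ j + N w $ i $ 2 * G w $ 2 $ j)"
      by (simp add: matrix_matrix_mult_def sum_2)
    then show ?thesis
      using N gen[OF G] by (simp add: int_poly_on_roots_add int_poly_on_roots_mult n)
  qed
  from M show ?thesis
  proof (induction arbitrary: i j)
    case one
    show ?case
      using exhaust_2[of i] exhaust_2[of j] by (auto simp: mat_1_eq_mat2 basic)
  qed (auto intro!: step)
qed

lemma int_poly_on_roots_Gq_trace:
  "0 < n \<Longrightarrow> M \<in> Gq \<Longrightarrow> int_poly_on_roots n (\<lambda>w. trace (M w))"
  unfolding trace_def sum_2 by (intro int_poly_on_roots_add int_poly_on_roots_Gq_entry)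

lemma fourier_inversion_primitive_root:
  assumes \<zeta>: "primitive_root_of_unity n \<zeta>" and l: "l < n"
  shows "(\<Sum>j<n. (\<Sum>k<n. of_int (a k) * (\<zeta> ^ j) ^ k) * (\<zeta> ^ j) ^ (n - l)) = of_nat n * of_int (a l)"
proof -
  have dvd_iff: "n dvd k + (n - l) \<longleftrightarrow> k = l" if "k < n" for k
  proof
    assume "n dvd k + (n - l)"
    then obtain q where q: "k + (n - l) = n * q"
      by (elim dvdE)
    then have "n * q < n * 2" "0 < n * q"
      using that l by linarith+
    then have "q = 1"
      by simp
    then show "k = l"
      using q l by simp
  qed (use l in simp)
  have pow: "(\<zeta> ^ j) ^ k * (\<zeta> ^ j) ^ (n - l) = (\<zeta> ^ (k + (n - l))) ^ j" for j k
    unfolding power_add[symmetric] by (simp only: power_mult[symmetric] mult.commute)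
  have "(\<Sum>j<n. (\<Sum>k<n. of_int (a k) * (\<zeta> ^ j) ^ k) * (\<zeta> ^ j) ^ (n - l)) =
      (\<Sum>j<n. \<Sum>k<n. of_int (a k) * (\<zeta> ^ (k + (n - l))) ^ j)"
    unfolding sum_distrib_right mult.assoc pow ..
  also have "\<dots> = (\<Sum>k<n. of_int (a k) * (\<Sum>j<n. (\<zeta> ^ (k + (n - l))) ^ j))"
    unfolding sum_distrib_left by (rule sum.swap)
  also have "\<dots> = (\<Sum>k<n. if k = l then of_int (a k) * of_nat n else 0)"
    using dvd_iff by (intro sum.cong) (simp_all add: sum_powers_primitive_root_of_unity[OF \<zeta>])
  also have "\<dots> = of_nat n * of_int (a l)"
    using l by simp
  finally show ?thesis .
qed

lemma fourier_coeff_diff_bound: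
  assumes \<zeta>: "primitive_root_of_unity n \<zeta>" and n: "2 \<le> n"
    and f: "\<And>w. w ^ n = 1 \<Longrightarrow> f w = (\<Sum>k<n. of_int (a k) * w ^ k)"
    and B: "\<And>j. j \<in> {1..<n} \<Longrightarrow> cmod (f (\<zeta> ^ j)) \<le> B"
    and l: "l < n"
  shows "\<bar>of_int (a l - a (n - 1))\<bar> \<le> 2 * B"
proof -
  note root = primitive_root_of_unity_power_root[OF \<zeta>]
  have norm_root: "cmod (\<zeta> ^ j) = 1" for j
    using power_eq_1_iff[OF root[of j]] n by auto
  have "1 \<in> {1..<n}"
    using n by simp
  then have B0: "0 \<le> B"
    using B norm_ge_zero order_trans by blast
  have "of_nat n * of_int (a l - a (n - 1)) =
      (\<Sum>j<n. f (\<zeta> ^ j) * ((\<zeta> ^ j) ^ (n - l) - (\<zeta> ^ j) ^ (n - (n - 1))))"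
    using fourier_inversion_primitive_root[OF \<zeta> l, of a] fourier_inversion_primitive_root[OF \<zeta>, of "n - 1" a] n
    by (simp add: f root right_diff_distrib sum_subtractf)
  \<comment> \<open>taking differences removes the term \<open>j = 0\<close>, where \<open>f 1\<close> is not bounded\<close>
  also have "\<dots> = (\<Sum>j\<in>{1..<n}. f (\<zeta> ^ j) * ((\<zeta> ^ j) ^ (n - l) - \<zeta> ^ j))"
  proof -
    have "{..<n} = insert 0 {1..<n}"
      using n by auto
    then show ?thesis
      using n by simp
  qed
  finally have "cmod (of_nat n * of_int (a l - a (n - 1))) \<le>
      (\<Sum>j\<in>{1..<n}. cmod (f (\<zeta> ^ j) * ((\<zeta> ^ j) ^ (n - l) - \<zeta> ^ j)))"
    by (metis norm_sum)
  also have "\<dots> \<le> (\<Sum>j\<in>{1..<n}. B * 2)"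
  proof (intro sum_mono)
    fix j assume j: "j \<in> {1..<n}"
    have "cmod ((\<zeta> ^ j) ^ (n - l) - \<zeta> ^ j) \<le> 2"
      using norm_triangle_ineq4[of "(\<zeta> ^ j) ^ (n - l)" "\<zeta> ^ j"] norm_root by (simp add: norm_power)
    then show "cmod (f (\<zeta> ^ j) * ((\<zeta> ^ j) ^ (n - l) - \<zeta> ^ j)) \<le> B * 2"
      using B[OF j] B0 unfolding norm_mult by (intro mult_mono) auto
  qed
  also have "\<dots> \<le> of_nat n * (2 * B)"
    using B0 by (simp add: mult_left_mono)
  finally have "real n * \<bar>of_int (a l - a (n - 1))\<bar> \<le> real n * (2 * B)"
    by (simp only: norm_mult norm_of_nat norm_of_int)
  then show ?thesis
    using n by simp
qed

lemma finite_int_poly_values_bounded_on_roots: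
  assumes \<zeta>: "primitive_root_of_unity n \<zeta>" and n: "2 \<le> n"
  shows "finite {f \<zeta> | f. int_poly_on_roots n f \<and> (\<forall>j\<in>{1..<n}. cmod (f (\<zeta> ^ j)) \<le> B)}"
proof -
  define N where "N = \<lceil>2 * B\<rceil>"
  define D where "D = (\<lambda>d. \<Sum>k<n. of_int (d k) * \<zeta> ^ k) ` ({..<n} \<rightarrow>\<^sub>E {-N..N})"
  have "f \<zeta> \<in> D" if f: "int_poly_on_roots n f" and B: "\<forall>j\<in>{1..<n}. cmod (f (\<zeta> ^ j)) \<le> B" for f
  proof -
    obtain a where a: "\<And>w. w ^ n = 1 \<Longrightarrow> f w = (\<Sum>k<n. of_int (a k) * w ^ k)"
      using f unfolding int_poly_on_roots_def by blast
    define d where "d = restrict (\<lambda>k. a k - a (n - 1)) {..<n}"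
    have "d k \<in> {-N..N}" if "k < n" for k
    proof -
      have "\<bar>of_int (d k)\<bar> \<le> 2 * B"
        using fourier_coeff_diff_bound[OF \<zeta> n a B[rule_format] that] that
        by (simp add: d_def)
      then show ?thesis
        unfolding N_def by (auto simp: abs_le_iff le_ceiling_iff minus_le_iff)
    qed
    then have "d \<in> {..<n} \<rightarrow>\<^sub>E {-N..N}"
      unfolding d_def by auto
    moreover have "(\<Sum>k<n. \<zeta> ^ k) = 0"
      using sum_powers_primitive_root_of_unity[OF \<zeta>, of 1] n by simp
    then have "f \<zeta> = (\<Sum>k<n. of_int (d k) * \<zeta> ^ k)"
      using a[of \<zeta>] \<zeta> unfolding primitive_root_of_unity_def d_def
      by (simp add: left_diff_distrib sum_subtractf flip: sum_distrib_left)
    ultimately show ?thesis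
      unfolding D_def by blast
  qed
  then have "{f \<zeta> | f. int_poly_on_roots n f \<and> (\<forall>j\<in>{1..<n}. cmod (f (\<zeta> ^ j)) \<le> B)} \<subseteq> D"
    by blast
  moreover have "finite D"
    unfolding D_def by (intro finite_imageI finite_PiE) auto
  ultimately show ?thesis
    by (rule finite_subset)
qed

lemma finite_trace_Gq_at_order_le_6:
  assumes \<zeta>: "primitive_root_of_unity n \<zeta>" and n: "2 \<le> n" "n \<le> 6"
  shows "finite (trace ` Gq_at \<zeta>)"
proof -
  have "trace (M \<zeta>) \<in> {f \<zeta> | f. int_poly_on_roots n f \<and> (\<forall>j\<in>{1..<n}. cmod (f (\<zeta> ^ j)) \<le> 2)}"
    if M: "M \<in> Gq" for M
  proof -
    have "cmod (trace (M (\<zeta> ^ j))) \<le> 2" if j: "j \<in> {1..<n}" for j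
    proof (rule norm_trace_Gq_at_le_2_if_root_of_unity)
      show "(\<zeta> ^ j) ^ n = 1"
        using \<zeta> by (rule primitive_root_of_unity_power_root)
      show "\<zeta> ^ j \<noteq> 1"
        using \<zeta> j unfolding primitive_root_of_unity_def by auto
      show "M (\<zeta> ^ j) \<in> Gq_at (\<zeta> ^ j)"
        using M unfolding Gq_at_def by blast
    qed (use n in auto)
    moreover have "int_poly_on_roots n (\<lambda>w. trace (M w))"
      using int_poly_on_roots_Gq_trace[OF _ M] n by simp
    ultimately show ?thesis
      by (auto intro!: exI[of _ "\<lambda>w. trace (M w)"])
  qed
  then have "trace ` Gq_at \<zeta> \<subseteq> {f \<zeta> | f. int_poly_on_roots n f \<and> (\<forall>j\<in>{1..<n}. cmod (f (\<zeta> ^ j)) \<le> 2)}"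
    unfolding Gq_at_def by blast
  then show ?thesis
    using finite_int_poly_values_bounded_on_roots[OF \<zeta> n(1)] by (rule finite_subset)
qed

section \<open>Parameters with infinitely many traces\<close>

lemma infinite_if_inj_range_subset:
  fixes f :: "nat \<Rightarrow> 'a"
  assumes "inj f" "range f \<subseteq> S"
  shows "infinite S"
  using assms range_inj_infinite infinite_super by blast

lemma mat_pow_Rq: "mat_pow (Rq z) k = mat2 (z ^ k) (\<Sum>i<k. z ^ i) 0 1"
  by (induction k) (simp_all add: mat_1_eq_mat2 gens_mat2 mat2_eq_iff algebra_simps)

lemma inj_power_if_not_root_of_unity:
  fixes z :: complex
  assumes "z \<noteq> 0" "\<And>m. 0 < m \<Longrightarrow> z ^ m \<noteq> 1"
  shows "inj (\<lambda>k. z ^ k)"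
proof -
  have "z ^ i \<noteq> z ^ j" if "i < j" for i j
    using power_diff_eq_1_if_power_eq[OF assms(1), of i j] assms(2)[of "j - i"] that by auto
  then show ?thesis
    by (metis injI linorder_neqE_nat)
qed

lemma infinite_trace_Gq_at_if_not_root_of_unity:
  assumes "z \<noteq> 0" "\<And>m. 0 < m \<Longrightarrow> z ^ m \<noteq> 1"
  shows "infinite (trace ` Gq_at z)"
proof -
  have "inj (\<lambda>k. z ^ k + 1)"
    using inj_power_if_not_root_of_unity[OF assms] by (simp add: inj_on_def)
  moreover have "z ^ k + 1 \<in> trace ` Gq_at z" for k
    using Gq_at_mat_pow[of "Rq z" z k] gens_at_subset_Gq_at
    by (force simp: mat_pow_Rq gens_at_def)
  ultimately show ?thesis
    by (intro infinite_if_inj_range_subset[of "\<lambda>k. z ^ k + 1"]) auto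
qed

lemma infinite_trace_Gq_at_1: "infinite (trace ` Gq_at 1)"
proof -
  have "of_nat k \<in> trace ` Gq_at 1" for k
  proof
    show "mat_pow (Rq 1) k ** Sq 1 \<in> Gq_at 1"
      using gens_at_subset_Gq_at by (intro Gq_at_mult Gq_at_mat_pow) (auto simp: gens_at_def)
    show "of_nat k = trace (mat_pow (Rq 1) k ** Sq 1)"
      unfolding mat_pow_Rq by (simp add: gens_mat2)
  qed
  then show ?thesis
    by (intro infinite_if_inj_range_subset[of "of_nat"]) (auto simp: inj_of_nat)
qed

lemma norm_le_1_if_bounded_power_sums:
  fixes a b :: complex
  assumes ab: "cmod a * cmod b = 1" and bounded: "\<And>k. cmod (a ^ k + b ^ k) \<le> C"
  shows "cmod a \<le> 1"
proof (rule ccontr)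
  assume "\<not> cmod a \<le> 1"
  then have a: "1 < cmod a"
    by simp
  have "cmod b \<le> 1"
  proof (rule ccontr)
    assume "\<not> cmod b \<le> 1"
    then have "1 * 1 < cmod a * cmod b"
      using a by (intro mult_strict_mono) auto
    then show False
      using ab by simp
  qed
  obtain k where k: "C + 1 < cmod a ^ k"
    using real_arch_pow[OF a] by blast
  have "cmod a ^ k - 1 \<le> cmod (a ^ k) - cmod (b ^ k)"
    using \<open>cmod b \<le> 1\<close> by (simp add: norm_power power_le_one)
  also have "\<dots> \<le> cmod (a ^ k + b ^ k)"
    by (metis norm_diff_ineq)
  finally show False
    using bounded[of k] k by linarith
qed

definition trace_sq_over_det :: "cmat2 \<Rightarrow> complex" where
  "trace_sq_over_det X = trace X ^ 2 / det X"

lemma trace_sq_over_det_real_if_bounded_traces: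
  fixes X :: cmat2
  assumes det: "cmod (det X) = 1" and bounded: "\<And>k. cmod (trace (mat_pow X k)) \<le> C"
  shows "\<exists>s. trace_sq_over_det X = of_real s \<and> 0 \<le> s \<and> s \<le> 4"
proof -
  obtain l1 l2 where l: "l1 + l2 = trace X" "l1 * l2 = det X"
    using exists_sum_prod_eq by blast
  have prod: "cmod l1 * cmod l2 = 1"
    using l(2) det by (metis norm_mult)
  have "cmod (l1 ^ k + l2 ^ k) \<le> C" for k
    using bounded[of k] trace_mat_pow[OF l] by simp
  then have le1: "cmod l1 \<le> 1" "cmod l2 \<le> 1"
    using norm_le_1_if_bounded_power_sums[of l1 l2 C] norm_le_1_if_bounded_power_sums[of l2 l1 C] prod
    by (simp_all add: add.commute mult.commute)
  have "1 \<le> cmod l1" "1 \<le> cmod l2"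
    using prod mult_left_le[OF le1(2), of "cmod l1"] mult_right_le_one_le[OF _ _ le1(1), of "cmod l2"]
    by (simp_all add: mult.commute)
  then have l1: "cmod l1 = 1" and l2: "cmod l2 = 1"
    using le1 by simp_all
  then have "l1 \<noteq> 0" "l2 \<noteq> 0"
    by auto
  then have "trace_sq_over_det X = (l1 + l2) * (inverse l1 + inverse l2)"
    unfolding trace_sq_over_det_def l[symmetric] by (simp add: field_simps power2_eq_square)
  also have "\<dots> = (l1 + l2) * cnj (l1 + l2)"
    using cnj_eq_inverse_if_norm_1[OF l1] cnj_eq_inverse_if_norm_1[OF l2] by simp
  also have "\<dots> = of_real ((cmod (l1 + l2))^2)"
    by (rule complex_norm_square[symmetric])
  finally have "trace_sq_over_det X = of_real ((cmod (l1 + l2))^2)" .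
  moreover have "cmod (l1 + l2) \<le> 2"
    using l1 l2 norm_triangle_ineq[of l1 l2] by simp
  then have "(cmod (l1 + l2))^2 \<le> 2^2"
    by (intro power_mono) simp_all
  ultimately show ?thesis
    by (intro exI[of _ "(cmod (l1 + l2))^2"]) simp
qed

lemma trace_sq_over_det_Gq_at_real:
  assumes fin: "finite (trace ` Gq_at z)" and z: "cmod z = 1" and X: "X \<in> Gq_at z"
  shows "\<exists>s. trace_sq_over_det X = of_real s \<and> 0 \<le> s \<and> s \<le> 4"
proof -
  obtain C where "\<forall>t\<in>trace ` Gq_at z. cmod t \<le> C"
    using finite_imp_bounded[OF fin] bounded_iff by blast
  then have "cmod (trace (mat_pow X k)) \<le> C" for k
    using Gq_at_mat_pow[OF X] by blast
  then show ?thesis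
    using trace_sq_over_det_real_if_bounded_traces norm_det_Gq_at[OF z X] by blast
qed

lemma real_if_square_nonneg_real:
  fixes t :: complex
  assumes "t ^ 2 = of_real s" "0 \<le> s"
  shows "t = of_real (Re t)"
proof -
  have "2 * Re t * Im t = 0" "Re t ^ 2 - Im t ^ 2 = s"
    using assms(1) unfolding complex_eq_iff power2_eq_square by auto
  moreover have "Im t ^ 2 > 0" if "Im t \<noteq> 0"
    using that by simp
  ultimately have "Im t = 0"
    using assms(2) by (cases "Re t = 0") auto
  then show ?thesis
    by (simp add: complex_eq_iff)
qed

text \<open>The real inequality behind the commutator estimate; with \<open>a = sqrt p\<close>, \<open>b = sqrt q\<close>,
  \<open>c = sqrt r\<close> the difference of the two sides is \<open>(c - a b / 2)^2 + (a b c - \<rho>)\<close>.\<close>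
lemma commutator_trace_real_inequality:
  fixes p q r \<rho> :: real
  assumes "0 \<le> p" "0 \<le> q" "0 \<le> r" "\<rho>^2 = p * q * r"
  shows "2 - (p + q + r - \<rho> - 2) \<le> (4 - p) * (4 - q) / 4"
proof -
  define a b c where "a = sqrt p" and "b = sqrt q" and "c = sqrt r"
  have abc: "a^2 = p" "b^2 = q" "c^2 = r"
    using assms unfolding a_def b_def c_def by simp_all
  have "\<rho> \<le> sqrt (\<rho>^2)"
    by simp
  also have "\<dots> = a * b * c"
    using assms(4) by (simp add: a_def b_def c_def real_sqrt_mult)
  finally have "\<rho> \<le> a * b * c" .
  moreover have "(4 - p) * (4 - q) / 4 - (2 - (p + q + r - \<rho> - 2)) = (c - a * b / 2)^2 + (a * b * c - \<rho>)"
    unfolding abc[symmetric] by (simp add: power2_eq_square field_simps)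
  ultimately show ?thesis
    using zero_le_power2[of "c - a * b / 2"] by linarith
qed

lemma commutator_trace_bound:
  assumes det: "det A \<noteq> 0" "det B \<noteq> 0"
    and p: "trace_sq_over_det A = of_real p" "0 \<le> p"
    and q: "trace_sq_over_det B = of_real q" "0 \<le> q"
    and r: "trace_sq_over_det (A ** B) = of_real r" "0 \<le> r"
  shows "\<exists>t. trace (commutator A B) = of_real t \<and> 2 - t \<le> (4 - p) * (4 - q) / 4"
proof -
  define P where "P = trace A * trace B * trace (A ** B) / (det A * det B)"
  have "P^2 = trace_sq_over_det A * trace_sq_over_det B * trace_sq_over_det (A ** B)"
    unfolding P_def trace_sq_over_det_def using det by (simp add: det_mul field_simps power2_eq_square)
  then have P2: "P^2 = of_real (p * q * r)"
    unfolding p(1) q(1) r(1) by simp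
  have P_real: "P = of_real (Re P)"
    using p(2) q(2) r(2) by (intro real_if_square_nonneg_real[OF P2]) simp
  have "(Re P)^2 = p * q * r"
    using P2 by (subst (asm) P_real) (metis of_real_eq_iff of_real_power)
  have "trace (commutator A B) = (trace A ^ 2 * det B + trace B ^ 2 * det A + trace (A ** B) ^ 2
      - trace A * trace B * trace (A ** B) - 2 * det A * det B) / (det A * det B)"
    using trace_commutator[OF det] det by (simp add: eq_divide_eq)
  also have "\<dots> = trace_sq_over_det A + trace_sq_over_det B + trace_sq_over_det (A ** B) - P - 2"
    using det unfolding trace_sq_over_det_def P_def by (simp add: det_mul field_simps)
  also have "\<dots> = of_real (p + q + r - Re P - 2)"
    using p q r by (subst P_real) simp
  finally show ?thesis
    using commutator_trace_real_inequality[OF p(2) q(2) r(2) \<open>(Re P)^2 = p * q * r\<close>] by blast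
qed

lemma mat_pow_unipotent:
  assumes "b * c = - (x * x)"
  shows "mat_pow (mat2 (1 + x) b c (1 - x)) j =
    mat2 (1 + of_nat j * x) (of_nat j * b) (of_nat j * c) (1 - of_nat j * x)"
proof (induction j)
  case 0
  then show ?case by (simp add: mat_1_eq_mat2)
next
  case (Suc j)
  show ?case
    unfolding mat_pow.simps Suc.IH mat2_mult mat2_eq_iff of_nat_Suc
    by (intro conjI) (use assms in algebra)+
qed

lemma trace_mat_pow_unipotent_mult:
  assumes "b * c = - (x * x)"
  shows "trace (mat_pow (mat2 (1 + x) b c (1 - x)) j ** Y) =
    trace Y + of_nat j * trace (mat2 x b c (- x) ** Y)"
proof -
  obtain p q r s where "Y = mat2 p q r s"
    by (rule mat2_cases)
  then show ?thesis
    unfolding mat_pow_unipotent[OF assms] by (simp add: algebra_simps)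
qed

lemma unipotent_mat2_form:
  assumes "det C = 1" "trace C = 2"
  obtains x b c where "C = mat2 (1 + x) b c (1 - x)" "b * c = - (x * x)"
proof -
  obtain a b c d where C: "C = mat2 a b c d"
    by (rule mat2_cases)
  define x where "x = a - 1"
  have "a + d = 2" and det_C: "a * d - b * c = 1"
    using assms unfolding C by simp_all
  then have d: "d = 1 - x"
    unfolding x_def by (simp add: eq_diff_eq add.commute)
  show ?thesis
  proof
    show "C = mat2 (1 + x) b c (1 - x)"
      unfolding C d x_def by simp
    show "b * c = - (x * x)"
      using det_C unfolding d x_def by algebra
  qed
qed

lemma traceless_mat2_eq_0_if_trace_products_0:
  assumes z: "z \<noteq> 0" "z^2 - z + 1 \<noteq> 0"
    and "trace (mat2 x b c (- x) ** Rq z) = 0" "trace (mat2 x b c (- x) ** Sq z) = 0"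
      "trace (mat2 x b c (- x) ** (Rq z ** Sq z)) = 0"
  shows "x = 0 \<and> b = 0 \<and> c = 0"
proof -
  have e: "x * z + c - x = 0" "b * z = c" "x + b - c = 0"
    using assms by (simp_all add: gens_mat2 field_simps)
  then have "b * (z * z - z + 1) = 0"
    by algebra
  then have "b = 0"
    using z(2) by (simp add: power2_eq_square)
  then show ?thesis
    using e by auto
qed

lemma infinite_trace_Gq_at_if_unipotent:
  assumes z: "z \<noteq> 0" "z^2 - z + 1 \<noteq> 0"
    and C: "C \<in> Gq_at z" "det C = 1" "trace C = 2" "C \<noteq> mat 1"
  shows "infinite (trace ` Gq_at z)"
proof -
  obtain x b c where C_eq: "C = mat2 (1 + x) b c (1 - x)" and bc: "b * c = - (x * x)"
    using unipotent_mat2_form[OF C(2,3)] by blast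
  have "\<not> (x = 0 \<and> b = 0 \<and> c = 0)"
    using C(4) unfolding C_eq by (auto simp: mat_1_eq_mat2)
  then obtain Y where "Y \<in> {Rq z, Sq z, Rq z ** Sq z}" and Y_nonzero: "trace (mat2 x b c (- x) ** Y) \<noteq> 0"
    using traceless_mat2_eq_0_if_trace_products_0[OF z] by blast
  moreover have "Rq z \<in> Gq_at z" "Sq z \<in> Gq_at z"
    using gens_at_subset_Gq_at unfolding gens_at_def by auto
  ultimately have Y: "Y \<in> Gq_at z"
    using Gq_at_mult by auto
  have "inj (\<lambda>j. trace (mat_pow C j ** Y))"
    unfolding C_eq trace_mat_pow_unipotent_mult[OF bc] using Y_nonzero by (intro injI) simp
  moreover have "range (\<lambda>j. trace (mat_pow C j ** Y)) \<subseteq> trace ` Gq_at z"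
    using Gq_at_mult[OF Gq_at_mat_pow[OF C(1)] Y] by blast
  ultimately show ?thesis
    by (rule infinite_if_inj_range_subset)
qed

lemma trace_commutator_commuting:
  assumes B: "B = mat2 \<omega> u 0 1" "\<omega> \<noteq> 0" "\<omega> \<noteq> 1" "u \<noteq> 0" and A: "det A \<noteq> 0"
    and D: "D = commutator A B" "D ** B = B ** D" "D \<noteq> mat 1"
  shows "trace D = \<omega> + inverse \<omega>"
proof -
  have det_B: "det B \<noteq> 0"
    using B by simp
  have inv_A: "matrix_inv A ** A = mat 1" and inv_B: "matrix_inv B ** B = mat 1"
    using matrix_inv_right_left[of A] matrix_inv_right_left[of B] A det_B
    by (simp_all add: invertible_det_nz)
  have "D ** B = A ** B ** matrix_inv A ** (matrix_inv B ** B)"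
    unfolding D commutator_def by (simp only: matrix_mul_assoc)
  then have "D ** B = (A ** B) ** matrix_inv A"
    using inv_B by simp
  then have "trace (D ** B) = trace (matrix_inv A ** A ** B)"
    using trace_mul_sym[of "A ** B" "matrix_inv A"] by (simp add: matrix_mul_assoc)
  then have trace_DB: "trace (D ** B) = \<omega> + 1"
    using inv_A B(1) by simp
  obtain a b c d where D_eq: "D = mat2 a b c d"
    by (rule mat2_cases)
  have c: "c = 0" and "a * u + b = \<omega> * b + u * d" "a * d - b * c = 1" "a * \<omega> + c * u + d = \<omega> + 1"
    using D(2) trace_DB det_commutator[OF A det_B] B(4) unfolding D(1)[symmetric] unfolding D_eq B(1)
    by (simp_all add: mat2_eq_iff add.assoc)
  then have ad: "a * d = 1" "d = \<omega> + 1 - a * \<omega>" and b: "(a - d) * u = (\<omega> - 1) * b"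
    by (auto simp: algebra_simps)
  then have "(a * \<omega> - 1) * (a - 1) = 0"
    by algebra
  moreover have "a \<noteq> 1"
  proof
    assume "a = 1"
    then have "d = 1" "b = 0"
      using ad b B(3) by auto
    then show False
      using D(3) \<open>a = 1\<close> c unfolding D_eq by (simp add: mat_1_eq_mat2)
  qed
  ultimately have "\<omega> * a = 1"
    by (simp add: mult.commute)
  then have "a = inverse \<omega>" "d = \<omega>"
    using ad(2) inverse_unique by (auto simp: mult.commute)
  then show ?thesis
    unfolding D_eq by simp
qed

lemma trace_commutator_Sq:
  assumes "z \<noteq> 0" "\<omega> \<noteq> 0"
  shows "trace (commutator (Sq z) (mat2 \<omega> u 0 1)) = \<omega> + inverse \<omega> + z * u^2 / \<omega>"
  using assms unfolding commutator_def
  by (simp add: gens_mat2 matrix_inv_mat2 field_simps power2_eq_square)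

lemma Sq_not_commute:
  assumes "z \<noteq> 0" "u \<noteq> 0"
  shows "Sq z ** mat2 \<omega> u 0 1 \<noteq> mat2 \<omega> u 0 1 ** Sq z"
  using assms by (simp add: gens_mat2 mat2_eq_iff)

primrec iter_commutator :: "cmat2 \<Rightarrow> cmat2 \<Rightarrow> nat \<Rightarrow> cmat2" where
  "iter_commutator A B 0 = A"
| "iter_commutator A B (Suc k) = commutator (iter_commutator A B k) B"

lemma Gq_at_iter_commutator:
  "z \<noteq> 0 \<Longrightarrow> A \<in> Gq_at z \<Longrightarrow> B \<in> Gq_at z \<Longrightarrow> iter_commutator A B k \<in> Gq_at z"
  by (induction k) (auto intro: Gq_at_commutator)

lemma commutator_Gq_at_trace_bound:
  assumes fin: "finite (trace ` Gq_at z)" and z: "cmod z = 1"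
    and A: "A \<in> Gq_at z" and B: "B \<in> Gq_at z" and B_sq: "trace_sq_over_det B = of_real (4 - x)"
  obtains t where "trace (commutator A B) = of_real t" "t \<le> 2"
    "2 - t \<le> (4 - Re (trace_sq_over_det A)) * x / 4"
proof -
  have z0: "z \<noteq> 0"
    using z by auto
  have det_A: "det A \<noteq> 0" and det_B: "det B \<noteq> 0"
    using Gq_at_invertible[OF z0] A B by blast+
  obtain p where p: "trace_sq_over_det A = of_real p" "0 \<le> p"
    using trace_sq_over_det_Gq_at_real[OF fin z A] by blast
  obtain q where "trace_sq_over_det B = of_real q" "0 \<le> q"
    using trace_sq_over_det_Gq_at_real[OF fin z B] by blast
  then have x4: "0 \<le> 4 - x"
    using B_sq by (metis of_real_eq_iff)
  obtain r where r: "trace_sq_over_det (A ** B) = of_real r" "0 \<le> r"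
    using trace_sq_over_det_Gq_at_real[OF fin z Gq_at_mult[OF A B]] by blast
  obtain t where t: "trace (commutator A B) = of_real t" "2 - t \<le> (4 - p) * x / 4"
    using commutator_trace_bound[OF det_A det_B p B_sq x4 r] by auto
  obtain s where "trace_sq_over_det (commutator A B) = of_real s" "s \<le> 4"
    using trace_sq_over_det_Gq_at_real[OF fin z Gq_at_commutator[OF z0 A B]] by blast
  moreover have "trace_sq_over_det (commutator A B) = of_real (t^2)"
    unfolding trace_sq_over_det_def det_commutator[OF det_A det_B] t(1) by simp
  ultimately have "t^2 = s"
    by (metis of_real_eq_iff)
  with \<open>s \<le> 4\<close> have "t^2 \<le> 2^2"
    by simp
  then have "t \<le> 2"
    by (rule power2_le_imp_le) simp
  then show ?thesis
    using that t p(1) by simp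
qed

lemma iter_commutator_trace_bound:
  assumes fin: "finite (trace ` Gq_at z)" and z: "cmod z = 1"
    and A: "A \<in> Gq_at z" and B: "B \<in> Gq_at z"
    and B_sq: "trace_sq_over_det B = of_real (4 - x)" and x: "0 \<le> x"
  shows "\<exists>t. trace (iter_commutator A B (Suc k)) = of_real t \<and> t \<le> 2 \<and> 2 - t \<le> x ^ Suc k"
proof -
  define C where "C = iter_commutator A B"
  define s where "s k = Re (trace_sq_over_det (C k))" for k
  have z0: "z \<noteq> 0"
    using z by auto
  have C_in: "C k \<in> Gq_at z" for k
    unfolding C_def using Gq_at_iter_commutator[OF z0 A B] .
  have "\<exists>t. trace (C (Suc k)) = of_real t \<and> t \<le> 2 \<and> 2 - t \<le> (4 - s k) * x / 4" for k
    using commutator_Gq_at_trace_bound[OF fin z C_in B B_sq] unfolding C_def s_def by (metis iter_commutator.simps(2))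
  then obtain t where t: "\<And>k. trace (C (Suc k)) = of_real (t k)" "\<And>k. t k \<le> 2"
    "\<And>k. 2 - t k \<le> (4 - s k) * x / 4"
    by metis
  have det_C: "det (C k) \<noteq> 0" and det_B: "det B \<noteq> 0" for k
    using Gq_at_invertible[OF z0] B C_in by blast+
  have s_Suc: "s (Suc k) = (t k)^2" for k
    using det_commutator[OF det_C det_B] t(1)[of k]
    unfolding s_def trace_sq_over_det_def by (simp add: C_def)
  have invariant: "(4 - s k) / 4 \<le> x ^ k" for k
  proof (induction k)
    case 0
    show ?case
      using trace_sq_over_det_Gq_at_real[OF fin z C_in[of 0]] unfolding s_def by auto
  next
    case (Suc k)
    have "(4 - s (Suc k)) / 4 \<le> 2 - t k"
      unfolding s_Suc using zero_le_power2[of "t k - 2"] by (simp add: power2_eq_square field_simps)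
    also have "\<dots> \<le> (4 - s k) / 4 * x"
      using t(3)[of k] by simp
    also have "\<dots> \<le> x ^ k * x"
      using Suc x by (rule mult_right_mono)
    finally show ?case
      by (simp add: mult.commute)
  qed
  have "2 - t k \<le> x ^ Suc k"
    using t(3)[of k] mult_right_mono[OF invariant[of k] x] by (simp add: mult.commute)
  then show ?thesis
    using t(1,2) unfolding C_def by auto
qed

lemma finite_range_LIMSEQ_0_imp_zero:
  fixes y :: "nat \<Rightarrow> 'a::real_normed_vector"
  assumes "finite (range y)" "y \<longlonglongrightarrow> 0"
  shows "\<exists>k. y k = 0"
proof (rule ccontr)
  assume nonzero: "\<nexists>k. y k = 0"
  define m where "m = Min (norm ` range y)"
  have "m \<in> norm ` range y"
    unfolding m_def using assms(1) by (intro Min_in) auto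
  then have "0 < m"
    using nonzero by auto
  then obtain k where "norm (y k) < m"
    using LIMSEQ_D[OF assms(2)] by fastforce
  moreover have "m \<le> norm (y k)"
    unfolding m_def using assms(1) by (intro Min_le) auto
  ultimately show False
    by simp
qed

lemma iter_commutator_eventually_1:
  assumes fin: "finite (trace ` Gq_at z)" and z: "cmod z = 1" "z^2 - z + 1 \<noteq> 0"
    and A: "A \<in> Gq_at z" and B: "B \<in> Gq_at z"
    and B_sq: "trace_sq_over_det B = of_real (4 - x)" and x: "0 \<le> x" "x < 1"
  shows "\<exists>k. iter_commutator A B (Suc k) = mat 1"
proof -
  define C where "C k = iter_commutator A B (Suc k)" for k
  have z0: "z \<noteq> 0"
    using z by auto
  obtain t where t: "\<And>k. trace (C k) = of_real (t k) \<and> t k \<le> 2 \<and> 2 - t k \<le> x ^ Suc k"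
    using iter_commutator_trace_bound[OF fin z(1) A B B_sq x(1)] unfolding C_def by metis
  have C_in: "C k \<in> Gq_at z" for k
    unfolding C_def using Gq_at_iter_commutator[OF z0 A B] .
  have "2 - t k \<in> (\<lambda>\<tau>. 2 - Re \<tau>) ` trace ` Gq_at z" for k
  proof -
    have "2 - t k = 2 - Re (trace (C k))"
      using t by simp
    then show ?thesis
      using C_in[of k] by blast
  qed
  then have "range (\<lambda>k. 2 - t k) \<subseteq> (\<lambda>\<tau>. 2 - Re \<tau>) ` trace ` Gq_at z"
    by blast
  then have "finite (range (\<lambda>k. 2 - t k))"
    using fin finite_subset by blast
  moreover have lim: "(\<lambda>k. x ^ Suc k) \<longlonglongrightarrow> 0"
    by (rule LIMSEQ_power_zero[THEN LIMSEQ_Suc]) (use x in simp)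
  have "(\<lambda>k. 2 - t k) \<longlonglongrightarrow> 0"
    by (rule tendsto_sandwich[OF _ _ tendsto_const lim]) (use t in \<open>auto intro!: always_eventually\<close>)
  ultimately obtain k where "t k = 2"
    using finite_range_LIMSEQ_0_imp_zero by fastforce
  then have "trace (C k) = 2"
    using t by simp
  moreover have "det (C k) = 1"
    unfolding C_def using Gq_at_invertible[OF z0] Gq_at_iter_commutator[OF z0 A B] B
    by (simp add: det_commutator)
  ultimately have "C k = mat 1"
    using infinite_trace_Gq_at_if_unipotent[OF z0 z(2) C_in] fin by blast
  then show ?thesis
    unfolding C_def by blast
qed

lemma iter_commutator_Sq_ne_1:
  assumes z: "z \<noteq> 0" and B: "B = mat2 \<omega> u 0 1" "\<omega> \<noteq> 0" "\<omega> \<noteq> 1" "u \<noteq> 0"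
    and x: "0 < x" "x < 1" "\<omega> + inverse \<omega> = of_real (2 - x)"
    and bound: "\<And>k. \<exists>t. trace (iter_commutator (Sq z) B (Suc k)) = of_real t \<and> 2 - t \<le> x ^ Suc k"
  shows "iter_commutator (Sq z) B (Suc k) \<noteq> mat 1"
proof
  assume "iter_commutator (Sq z) B (Suc k) = mat 1"
  then obtain k0 where k0: "iter_commutator (Sq z) B (Suc k0) = mat 1"
    and minimal: "\<And>j. j < k0 \<Longrightarrow> iter_commutator (Sq z) B (Suc j) \<noteq> mat 1"
    using exists_least_iff[of "\<lambda>k. iter_commutator (Sq z) B (Suc k) = mat 1"] by blast
  define C where "C = iter_commutator (Sq z) B"
  have det_B: "det B \<noteq> 0"
    using B by simp
  have det_C: "det (C k) \<noteq> 0" for k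
    by (induction k) (simp_all add: C_def gens_mat2 z det_commutator det_B)
  have comm: "C k0 ** B = B ** C k0"
    using commutator_eq_1_imp_commute[OF _ det_C det_B] k0 unfolding C_def by simp
  show False
  proof (cases k0)
    case 0
    then show False
      using comm Sq_not_commute[OF z B(4)] unfolding B(1) C_def by simp
  next
    case (Suc j)
    have "trace (C (Suc j)) = \<omega> + inverse \<omega>"
      using trace_commutator_commuting[OF B det_C] comm minimal[of j] Suc unfolding C_def by simp
    then have x_le: "x \<le> x ^ Suc j"
      using bound[of j] x(3) unfolding C_def by (auto simp flip: of_real_diff)
    show False
    proof (cases j)
      case 0
      have "trace (C (Suc 0)) = \<omega> + inverse \<omega> + z * u^2 / \<omega>"
        unfolding C_def B(1) by (simp add: trace_commutator_Sq z B(2))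
      then show False
        using \<open>trace (C (Suc j)) = \<omega> + inverse \<omega>\<close> 0 z B(2,4) by simp
    next
      case (Suc i)
      have "x ^ Suc j \<le> x ^ 2"
        using x Suc by (intro power_decreasing) auto
      also have "\<dots> < x"
        using x by (simp add: power2_eq_square)
      finally show False
        using x_le by simp
    qed
  qed
qed

lemma trace_sq_over_det_mat2_upper:
  "\<omega> \<noteq> 0 \<Longrightarrow> trace_sq_over_det (mat2 \<omega> u 0 1) = \<omega> + inverse \<omega> + 2"
  unfolding trace_sq_over_det_def by (simp add: field_simps power2_eq_square)

lemma exists_upper_triangular_in_Gq_at:
  assumes "\<zeta> ^ m \<noteq> 1"
  shows "\<exists>u. u \<noteq> 0 \<and> mat2 (\<zeta> ^ m) u 0 1 \<in> Gq_at \<zeta>"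
proof (intro exI conjI)
  show "(\<Sum>i<m. \<zeta> ^ i) \<noteq> 0"
    using assms power_diff_1_eq[of \<zeta> m] by auto
  show "mat2 (\<zeta> ^ m) (\<Sum>i<m. \<zeta> ^ i) 0 1 \<in> Gq_at \<zeta>"
    unfolding mat_pow_Rq[symmetric] using gens_at_subset_Gq_at
    by (intro Gq_at_mat_pow) (auto simp: gens_at_def)
qed

lemma infinite_trace_Gq_at_order_ge_7:
  assumes \<zeta>: "primitive_root_of_unity n \<zeta>" and n: "7 \<le> n"
  shows "infinite (trace ` Gq_at \<zeta>)"
proof
  assume fin: "finite (trace ` Gq_at \<zeta>)"
  have "\<zeta> ^ n = 1" "0 < n"
    using \<zeta> unfolding primitive_root_of_unity_def by auto
  then have norm_\<zeta>: "cmod \<zeta> = 1"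
    using power_eq_1_iff by blast
  then have \<zeta>0: "\<zeta> \<noteq> 0"
    by auto
  have not_sixth: "\<zeta>^2 - \<zeta> + 1 \<noteq> 0"
    using primitive_root_of_unity_sixth[OF \<zeta>] n by linarith
  define \<theta> where "\<theta> = 2 * pi / n"
  define x where "x = 2 - 2 * cos \<theta>"
  have x: "0 < x" "x < 1"
    using cos_2pi_div_bounds[OF n] unfolding x_def \<theta>_def by simp_all
  have cis_ne_1: "cis \<theta> \<noteq> 1"
    using x unfolding x_def by (auto simp: complex_eq_iff)
  obtain m where "\<zeta> ^ m = cis \<theta>"
    using primitive_root_of_unity_power_eq_cis[OF \<zeta>] unfolding \<theta>_def by blast
  then obtain u B where B_eq: "B = mat2 (cis \<theta>) u 0 1" and u0: "u \<noteq> 0" and B_in: "B \<in> Gq_at \<zeta>"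
    using exists_upper_triangular_in_Gq_at[of \<zeta> m] cis_ne_1 by auto
  have cis_sum: "cis \<theta> + inverse (cis \<theta>) = of_real (2 - x)"
    unfolding x_def by (simp add: complex_eq_iff)
  have B_sq: "trace_sq_over_det B = of_real (4 - x)"
    using trace_sq_over_det_mat2_upper[of "cis \<theta>" u] unfolding B_eq cis_sum by simp
  have S_in: "Sq \<zeta> \<in> Gq_at \<zeta>"
    using gens_at_subset_Gq_at unfolding gens_at_def by auto
  have bound: "\<exists>t. trace (iter_commutator (Sq \<zeta>) B (Suc k)) = of_real t \<and> 2 - t \<le> x ^ Suc k" for k
    using iter_commutator_trace_bound[OF fin norm_\<zeta> S_in B_in B_sq less_imp_le[OF x(1)]] by blast
  obtain k where "iter_commutator (Sq \<zeta>) B (Suc k) = mat 1"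
    using iter_commutator_eventually_1[OF fin norm_\<zeta> not_sixth S_in B_in B_sq less_imp_le[OF x(1)] x(2)]
    by blast
  then show False
    using iter_commutator_Sq_ne_1[OF \<zeta>0 B_eq _ cis_ne_1 u0 x cis_sum bound] by simp
qed

theorem corollary5p2:
  fixes \<zeta> :: complex
  assumes "\<zeta> \<noteq> 0"
  shows "finite (trace ` Gq_at \<zeta>) \<longleftrightarrow>
           (\<exists>n\<in>{2,3,4,5,6::nat}. primitive_root_of_unity n \<zeta>)"
proof
  assume fin: "finite (trace ` Gq_at \<zeta>)"
  then obtain m where "0 < m" "\<zeta> ^ m = 1"
    using infinite_trace_Gq_at_if_not_root_of_unity[OF assms] by blast
  then obtain n where \<zeta>: "primitive_root_of_unity n \<zeta>"
    by (rule primitive_root_of_unity_exists)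
  have "n \<noteq> 1"
    using \<zeta> fin infinite_trace_Gq_at_1 unfolding primitive_root_of_unity_def by auto
  moreover have "\<not> 7 \<le> n"
    using infinite_trace_Gq_at_order_ge_7[OF \<zeta>] fin by blast
  moreover have "1 \<le> n"
    using \<zeta> unfolding primitive_root_of_unity_def by simp
  ultimately show "\<exists>n\<in>{2,3,4,5,6::nat}. primitive_root_of_unity n \<zeta>"
    using \<zeta> by (intro bexI[of _ n]) auto
next
  assume "\<exists>n\<in>{2,3,4,5,6::nat}. primitive_root_of_unity n \<zeta>"
  then show "finite (trace ` Gq_at \<zeta>)"
    using finite_trace_Gq_at_order_le_6 by auto
qed

end
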